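(* Let $v,w\in\mathbb C\cong\mathbb R^2$ form a positively oriented basis, let $\vartheta\in(0,\pi)$ be the angle from $v$ to $w$, and let $H:S^1\to S^1$ be the holonomy obtained by moving the tracer point of a Prytz planimeter of length $\ell$ around the parallelogram with successive vertices $0,v,v+w,w,0$ (base point $0$). Then $H$ is the restriction to $S^1$ of $z\mapsto\frac{\alpha z+\beta}{\bar\beta z+\bar\alpha}$ for a matrix $\begin{pmatrix}\alpha&\beta\\ \bar\beta&\bar\alpha\end{pmatrix}\in SU(1,1)$ with trace $$2-4\,s^2,\qquad s=\sinh\!\Big(\frac{|v|}{2\ell}\Big)\sinh\!\Big(\frac{|w|}{2\ell}\Big)\sin\vartheta.$$ Consequently, if $s>1$ then $H$ has exactly two fixed points on $S^1$, one attracting and one repelling; if $s<1$ then $H$ has no fixed points on $S^1$. *)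

theory Defs
  imports "HOL-Analysis.Analysis"
begin

text \<open>Prytz planimeter: the tracer point follows the path gamma, the rod has length l and
  unit direction u (a point of the unit circle); the blade sits at gamma + l u and can only
  move in the direction of the rod.  Writing u' = i omega u, the no-slip condition
  Im((gamma' + l u') * cnj u) = 0 gives omega = - Im(gamma' * cnj u) / l.\<close>

definition prytz_ode :: "real \<Rightarrow> complex \<Rightarrow> complex \<Rightarrow> complex" where
  "prytz_ode l d u = - (\<i> * complex_of_real (Im (d * cnj u) / l)) * u"

definition prytz_transport ::
  "real \<Rightarrow> (real \<Rightarrow> complex) \<Rightarrow> complex \<Rightarrow> (real \<Rightarrow> complex) \<Rightarrow> bool" where
  "prytz_transport l \<gamma> z u \<longleftrightarrow>
     continuous_on {0..1} u \<and> u 0 = z \<and>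
     (\<exists>S. finite S \<and> (\<forall>t\<in>{0<..<1} - S.
        \<gamma> differentiable at t \<and>
        (u has_vector_derivative prytz_ode l (vector_derivative \<gamma> (at t)) (u t)) (at t)))"

definition prytz_holonomy :: "real \<Rightarrow> (real \<Rightarrow> complex) \<Rightarrow> complex \<Rightarrow> complex" where
  "prytz_holonomy l \<gamma> z = (THE w. \<exists>u. prytz_transport l \<gamma> z u \<and> u 1 = w)"

definition parallelogram_path :: "complex \<Rightarrow> complex \<Rightarrow> real \<Rightarrow> complex" where
  "parallelogram_path v w =
     (linepath 0 v +++ linepath v (v + w)) +++ (linepath (v + w) w +++ linepath w 0)"

definition circle_attracting_fp :: "(complex \<Rightarrow> complex) \<Rightarrow> complex \<Rightarrow> bool" where
  "circle_attracting_fp H z \<longleftrightarrow> cmod z = 1 \<and> H z = z \<and>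
     (\<exists>\<epsilon>>0. \<forall>y. cmod y = 1 \<and> cmod (y - z) < \<epsilon> \<longrightarrow> (\<lambda>n. (H ^^ n) y) \<longlonglongrightarrow> z)"

definition circle_repelling_fp :: "(complex \<Rightarrow> complex) \<Rightarrow> complex \<Rightarrow> bool" where
  "circle_repelling_fp H z \<longleftrightarrow> cmod z = 1 \<and> H z = z \<and>
     (\<exists>\<epsilon>>0. \<forall>y. cmod y = 1 \<and> 0 < cmod (y - z) \<and> cmod (y - z) < \<epsilon> \<longrightarrow>
        (\<exists>n. cmod ((H ^^ n) y - z) \<ge> \<epsilon>))"

end

theory Submission
  imports Defs
begin

text \<open>On the unit circle the planimeter equation for a straight side with velocity d is the
  Riccati equation u' = k (e - cnj e u^2) with k = |d| / (2 l) and e = - sgn d, whose flow is a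
  one-parameter group of SU(1,1) Moebius maps, the hyperbolic boosts.  The holonomy around the
  parallelogram is therefore the commutator of the boosts belonging to v and w, and a direct
  computation gives its trace 2 - 4 s^2.  An SU(1,1) map with |Re \<alpha>| < 1 has no fixed point on
  the circle.  If |Re \<alpha>| > 1 it has exactly two, p and q, and in the coordinate (z - p) / (z - q)
  it is multiplication by a real number of modulus less than 1, so p attracts and q repels.\<close>

section \<open>Moebius maps of SU(1,1) on the unit circle\<close>

text \<open>A pair (\<alpha>, \<beta>) stands for the matrix with rows (\<alpha>, \<beta>) and (cnj \<beta>, cnj \<alpha>); su11_mult
  is the matrix product.\<close>

fun su11 :: "complex \<times> complex \<Rightarrow> bool" where
  "su11 (\<alpha>, \<beta>) \<longleftrightarrow> (cmod \<alpha>)\<^sup>2 - (cmod \<beta>)\<^sup>2 = 1"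

fun moebius :: "complex \<times> complex \<Rightarrow> complex \<Rightarrow> complex" where
  "moebius (\<alpha>, \<beta>) z = (\<alpha> * z + \<beta>) / (cnj \<beta> * z + cnj \<alpha>)"

fun su11_mult :: "complex \<times> complex \<Rightarrow> complex \<times> complex \<Rightarrow> complex \<times> complex" where
  "su11_mult (\<alpha>, \<beta>) (\<alpha>', \<beta>') = (\<alpha> * \<alpha>' + \<beta> * cnj \<beta>', \<alpha> * \<beta>' + \<beta> * cnj \<alpha>')"

lemma cmod_eq_1_iff: "cmod z = 1 \<longleftrightarrow> z * cnj z = 1"
  by (metis complex_norm_square norm_ge_zero of_real_1 of_real_eq_iff power_one real_sqrt_abs
      real_sqrt_one abs_of_nonneg)

lemma su11_iff: "su11 (\<alpha>, \<beta>) \<longleftrightarrow> \<alpha> * cnj \<alpha> - \<beta> * cnj \<beta> = 1"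
proof -
  have "\<alpha> * cnj \<alpha> - \<beta> * cnj \<beta> = of_real ((cmod \<alpha>)\<^sup>2 - (cmod \<beta>)\<^sup>2)"
    by (simp add: complex_norm_square [symmetric])
  then show ?thesis by (metis su11.simps of_real_eq_1_iff)
qed

lemma moebius_uminus: "moebius (- \<alpha>, - \<beta>) = moebius (\<alpha>, \<beta>)"
proof
  fix z
  have "moebius (- \<alpha>, - \<beta>) z = - (\<alpha> * z + \<beta>) / - (cnj \<beta> * z + cnj \<alpha>)"
    by (simp add: add.commute)
  then show "moebius (- \<alpha>, - \<beta>) z = moebius (\<alpha>, \<beta>) z"
    by (simp only: minus_divide_divide moebius.simps)
qed

lemma su11_mult_closed: "su11 M \<Longrightarrow> su11 N \<Longrightarrow> su11 (su11_mult M N)"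
proof (cases M, cases N)
  fix \<alpha> \<beta> \<alpha>' \<beta>'
  assume "su11 M" "su11 N" and MN: "M = (\<alpha>, \<beta>)" "N = (\<alpha>', \<beta>')"
  then have "\<alpha> * cnj \<alpha> - \<beta> * cnj \<beta> = 1" "\<alpha>' * cnj \<alpha>' - \<beta>' * cnj \<beta>' = 1"
    by (simp_all only: su11_iff)
  moreover have "(\<alpha> * \<alpha>' + \<beta> * cnj \<beta>') * cnj (\<alpha> * \<alpha>' + \<beta> * cnj \<beta>')
      - (\<alpha> * \<beta>' + \<beta> * cnj \<alpha>') * cnj (\<alpha> * \<beta>' + \<beta> * cnj \<alpha>')
      = (\<alpha> * cnj \<alpha> - \<beta> * cnj \<beta>) * (\<alpha>' * cnj \<alpha>' - \<beta>' * cnj \<beta>')"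
    by (simp add: algebra_simps)
  ultimately show ?thesis
    by (simp only: MN su11_mult.simps su11_iff) simp
qed

lemma moebius_denom_nonzero:
  assumes "su11 (\<alpha>, \<beta>)" "cmod z = 1"
  shows "cnj \<beta> * z + cnj \<alpha> \<noteq> 0"
proof
  assume "cnj \<beta> * z + cnj \<alpha> = 0"
  then have "cmod \<alpha> = cmod (cnj \<beta> * z)"
    by (metis add_eq_0_iff complex_mod_cnj norm_minus_cancel)
  with assms show False by (simp add: norm_mult)
qed

lemma norm_moebius:
  assumes "su11 M" "cmod z = 1"
  shows "cmod (moebius M z) = 1"
proof (cases M)
  case (Pair \<alpha> \<beta>)
  have zz: "z * cnj z = 1" using assms(2) cmod_eq_1_iff by blast
  have "(\<alpha> * z + \<beta>) * cnj (\<alpha> * z + \<beta>) - (cnj \<beta> * z + cnj \<alpha>) * cnj (cnj \<beta> * z + cnj \<alpha>)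
      = (\<alpha> * cnj \<alpha> - \<beta> * cnj \<beta>) * (z * cnj z - 1)"
    by (simp add: algebra_simps)
  then have "(\<alpha> * z + \<beta>) * cnj (\<alpha> * z + \<beta>) = (cnj \<beta> * z + cnj \<alpha>) * cnj (cnj \<beta> * z + cnj \<alpha>)"
    using zz by simp
  then have "cmod (\<alpha> * z + \<beta>) = cmod (cnj \<beta> * z + cnj \<alpha>)"
    by (metis complex_norm_square norm_ge_zero of_real_eq_iff power2_eq_iff_nonneg)
  moreover have "cnj \<beta> * z + cnj \<alpha> \<noteq> 0"
    using moebius_denom_nonzero assms Pair by blast
  ultimately show ?thesis
    by (simp add: Pair norm_divide)
qed

lemma moebius_mult:
  assumes "su11 M" "su11 N" "cmod z = 1"
  shows "moebius M (moebius N z) = moebius (su11_mult M N) z"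
proof (cases M, cases N)
  fix \<alpha> \<beta> \<alpha>' \<beta>' assume MN: "M = (\<alpha>, \<beta>)" "N = (\<alpha>', \<beta>')"
  let ?N = "\<alpha>' * z + \<beta>'" and ?D = "cnj \<beta>' * z + cnj \<alpha>'"
  have D: "?D \<noteq> 0"
    using moebius_denom_nonzero assms MN by blast
  have "\<alpha> * (?N / ?D) + \<beta> = (\<alpha> * ?N + \<beta> * ?D) / ?D"
    and "cnj \<beta> * (?N / ?D) + cnj \<alpha> = (cnj \<beta> * ?N + cnj \<alpha> * ?D) / ?D"
    using D by (simp_all add: field_simps)
  then have "moebius M (moebius N z) = (\<alpha> * ?N + \<beta> * ?D) / (cnj \<beta> * ?N + cnj \<alpha> * ?D)"
    using D by (simp add: MN)
  also have "\<dots> = moebius (su11_mult M N) z"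
    by (simp add: MN algebra_simps)
  finally show ?thesis .
qed

lemma moebius_fixed_point_iff:
  assumes "su11 (\<alpha>, \<beta>)" "cmod z = 1"
  shows "moebius (\<alpha>, \<beta>) z = z \<longleftrightarrow> Im (cnj \<beta> * z) = Im \<alpha>"
proof -
  have zz: "z * cnj z = 1" using assms(2) cmod_eq_1_iff by blast
  have cz: "cnj z \<noteq> 0" using zz by auto
  have "moebius (\<alpha>, \<beta>) z = z \<longleftrightarrow> \<alpha> * z + \<beta> = z * (cnj \<beta> * z + cnj \<alpha>)"
    using moebius_denom_nonzero [OF assms] by (simp add: divide_eq_eq)
  also have "\<dots> \<longleftrightarrow> cnj z * (\<alpha> * z + \<beta>) = cnj z * (z * (cnj \<beta> * z + cnj \<alpha>))"
    using cz by simp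
  also have "\<dots> \<longleftrightarrow> \<alpha> * (z * cnj z) + \<beta> * cnj z = (z * cnj z) * (cnj \<beta> * z + cnj \<alpha>)"
    by (simp add: algebra_simps)
  also have "\<dots> \<longleftrightarrow> cnj \<beta> * z - cnj (cnj \<beta> * z) = \<alpha> - cnj \<alpha>"
    using zz by (auto simp: algebra_simps)
  also have "\<dots> \<longleftrightarrow> Im (cnj \<beta> * z) = Im \<alpha>"
    by (simp add: complex_eq_iff algebra_simps) linarith
  finally show ?thesis .
qed

section \<open>Elliptic and hyperbolic maps\<close>

lemma moebius_no_fixed_point_on_circle:
  assumes "su11 (\<alpha>, \<beta>)" "\<bar>Re \<alpha>\<bar> < 1" "cmod z = 1"
  shows "moebius (\<alpha>, \<beta>) z \<noteq> z"
proof
  assume "moebius (\<alpha>, \<beta>) z = z"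
  then have "Im (cnj \<beta> * z) = Im \<alpha>"
    using moebius_fixed_point_iff assms by blast
  moreover have "(cmod (cnj \<beta> * z))\<^sup>2 = (Re \<alpha>)\<^sup>2 + (Im \<alpha>)\<^sup>2 - 1"
    using assms by (simp add: norm_mult cmod_power2 [of \<alpha>])
  ultimately have "(Re (cnj \<beta> * z))\<^sup>2 = (Re \<alpha>)\<^sup>2 - 1"
    by (simp add: cmod_power2)
  moreover have "(Re \<alpha>)\<^sup>2 < 1"
    using assms(2) by (simp add: abs_square_less_1)
  ultimately show False
    by (metis diff_less_0_iff_less zero_le_power2 not_less)
qed

lemma moebius_diff:
  assumes "su11 (\<alpha>, \<beta>)" "cnj \<beta> * z + cnj \<alpha> \<noteq> 0" "cnj \<beta> * w + cnj \<alpha> \<noteq> 0"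
  shows "moebius (\<alpha>, \<beta>) z - moebius (\<alpha>, \<beta>) w
    = (z - w) / ((cnj \<beta> * z + cnj \<alpha>) * (cnj \<beta> * w + cnj \<alpha>))"
proof -
  have "(\<alpha> * z + \<beta>) * (cnj \<beta> * w + cnj \<alpha>) - (\<alpha> * w + \<beta>) * (cnj \<beta> * z + cnj \<alpha>)
      = (\<alpha> * cnj \<alpha> - \<beta> * cnj \<beta>) * (z - w)"
    by (simp add: algebra_simps)
  then have "(\<alpha> * z + \<beta>) * (cnj \<beta> * w + cnj \<alpha>) - (\<alpha> * w + \<beta>) * (cnj \<beta> * z + cnj \<alpha>) = z - w"
    using assms(1) unfolding su11_iff by simp
  then show ?thesis
    using assms(2,3) by (simp add: field_simps)
qed

lemma moebius_cross_ratio: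
  assumes M: "su11 (\<alpha>, \<beta>)"
    and p: "cmod p = 1" "moebius (\<alpha>, \<beta>) p = p"
    and q: "cmod q = 1" "moebius (\<alpha>, \<beta>) q = q"
    and z: "cmod z = 1" "z \<noteq> q"
  shows "moebius (\<alpha>, \<beta>) z \<noteq> q"
    and "(moebius (\<alpha>, \<beta>) z - p) / (moebius (\<alpha>, \<beta>) z - q)
      = (cnj \<beta> * q + cnj \<alpha>) / (cnj \<beta> * p + cnj \<alpha>) * ((z - p) / (z - q))"
proof -
  have Dz: "cnj \<beta> * z + cnj \<alpha> \<noteq> 0" and Dp: "cnj \<beta> * p + cnj \<alpha> \<noteq> 0"
    and Dq: "cnj \<beta> * q + cnj \<alpha> \<noteq> 0"
    using moebius_denom_nonzero M p q z by blast+
  have zq: "moebius (\<alpha>, \<beta>) z - q = (z - q) / ((cnj \<beta> * z + cnj \<alpha>) * (cnj \<beta> * q + cnj \<alpha>))"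
    using moebius_diff [OF M Dz Dq] q by simp
  have zp: "moebius (\<alpha>, \<beta>) z - p = (z - p) / ((cnj \<beta> * z + cnj \<alpha>) * (cnj \<beta> * p + cnj \<alpha>))"
    using moebius_diff [OF M Dz Dp] p by simp
  show "moebius (\<alpha>, \<beta>) z \<noteq> q"
    using zq z Dz Dq by (metis divide_eq_0_iff eq_iff_diff_eq_0 mult_eq_0_iff)
  show "(moebius (\<alpha>, \<beta>) z - p) / (moebius (\<alpha>, \<beta>) z - q)
      = (cnj \<beta> * q + cnj \<alpha>) / (cnj \<beta> * p + cnj \<alpha>) * ((z - p) / (z - q))"
  proof -
    have "(A / (X * P)) / (B / (X * Q)) = Q / P * (A / B)" if "X \<noteq> 0" "P \<noteq> 0" "Q \<noteq> 0"
      for A B X P Q :: complex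
      using that by (simp add: field_simps)
    then show ?thesis
      unfolding zq zp using Dz Dp Dq by blast
  qed
qed

lemma circle_attracting_repelling_fp:
  fixes H :: "complex \<Rightarrow> complex"
  assumes p: "cmod p = 1" and q: "cmod q = 1" "H q = q" and pq: "p \<noteq> q" and k: "cmod k < 1"
    and H: "\<And>z. cmod z = 1 \<Longrightarrow> z \<noteq> q \<Longrightarrow>
      cmod (H z) = 1 \<and> H z \<noteq> q \<and> (H z - p) / (H z - q) = k * ((z - p) / (z - q))"
  shows "circle_attracting_fp H p" and "circle_repelling_fp H q"
proof -
  have "H p = p"
    using H [OF p pq] by auto
  have iterate: "cmod ((H ^^ n) y) = 1 \<and> (H ^^ n) y \<noteq> q \<and>
      ((H ^^ n) y - p) / ((H ^^ n) y - q) = k ^ n * ((y - p) / (y - q))"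
    if "cmod y = 1" "y \<noteq> q" for y n
    using that by (induction n) (simp_all add: H)
  have invert: "x = (p - q * ((x - p) / (x - q))) / (1 - (x - p) / (x - q))" if "x \<noteq> q" for x
  proof -
    have "1 - (x - p) / (x - q) = (p - q) / (x - q)"
      and "p - q * ((x - p) / (x - q)) = x * (p - q) / (x - q)"
      using that by (simp_all add: field_simps)
    then show ?thesis
      using that pq by simp
  qed
  have converge: "(\<lambda>n. (H ^^ n) y) \<longlonglongrightarrow> p" if y: "cmod y = 1" "y \<noteq> q" for y
  proof -
    define \<rho> where "\<rho> = (y - p) / (y - q)"
    have "(H ^^ n) y = (p - q * (k ^ n * \<rho>)) / (1 - k ^ n * \<rho>)" for n
    proof -
      have "(H ^^ n) y \<noteq> q" "((H ^^ n) y - p) / ((H ^^ n) y - q) = k ^ n * \<rho>"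
        using iterate [OF y] unfolding \<rho>_def by auto
      then show ?thesis
        using invert by metis
    qed
    moreover have "(\<lambda>n. (p - q * (k ^ n * \<rho>)) / (1 - k ^ n * \<rho>)) \<longlonglongrightarrow> (p - q * (0 * \<rho>)) / (1 - 0 * \<rho>)"
      by (intro tendsto_intros LIMSEQ_power_zero k) simp
    ultimately show ?thesis
      by simp
  qed
  have "cmod (p - q) > 0"
    using pq by simp
  then show "circle_attracting_fp H p"
    unfolding circle_attracting_fp_def using p \<open>H p = p\<close> converge
    by (intro conjI exI [of _ "cmod (p - q)"]) (metis norm_minus_commute order.irrefl)+
  show "circle_repelling_fp H q"
    unfolding circle_repelling_fp_def
  proof (intro conjI exI [of _ "cmod (p - q) / 2"] allI impI)
    fix y assume y: "cmod y = 1 \<and> 0 < cmod (y - q) \<and> cmod (y - q) < cmod (p - q) / 2"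
    have "\<forall>\<^sub>F n in sequentially. dist ((H ^^ n) y) p < cmod (p - q) / 2"
      using converge y \<open>cmod (p - q) > 0\<close> by (intro tendstoD) auto
    then obtain n where n: "cmod ((H ^^ n) y - p) < cmod (p - q) / 2"
      by (auto simp: eventually_sequentially dist_norm)
    have "cmod (p - q) \<le> cmod ((H ^^ n) y - p) + cmod ((H ^^ n) y - q)"
      using norm_triangle_ineq4 [of "(H ^^ n) y - q" "(H ^^ n) y - p"] by simp
    then show "\<exists>n. cmod ((H ^^ n) y - q) \<ge> cmod (p - q) / 2"
      using n by (intro exI [of _ n]) simp
  qed (use q \<open>cmod (p - q) > 0\<close> in auto)
qed

lemma moebius_fixed_points_hyperbolic:
  assumes M: "su11 (\<alpha>, \<beta>)" and "Re \<alpha> < -1"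
  defines "r \<equiv> sqrt ((Re \<alpha>)\<^sup>2 - 1)"
  defines "p \<equiv> Complex (- r) (Im \<alpha>) / cnj \<beta>" and "q \<equiv> Complex r (Im \<alpha>) / cnj \<beta>"
  shows "r > 0" and "p \<noteq> q" and "{z. cmod z = 1 \<and> moebius (\<alpha>, \<beta>) z = z} = {p, q}"
proof -
  have "1 < (- Re \<alpha>)\<^sup>2"
    using \<open>Re \<alpha> < -1\<close> by (intro one_less_power) auto
  then have "1 < (Re \<alpha>)\<^sup>2"
    by simp
  then show "r > 0"
    by (simp add: r_def)
  from \<open>1 < (Re \<alpha>)\<^sup>2\<close> have r: "r\<^sup>2 = (Re \<alpha>)\<^sup>2 - 1"
    by (simp add: r_def)
  have \<beta>: "(cmod \<beta>)\<^sup>2 = r\<^sup>2 + (Im \<alpha>)\<^sup>2"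
    using M r by (simp add: cmod_power2 [of \<alpha>])
  moreover have "0 < r\<^sup>2"
    using \<open>r > 0\<close> by simp
  ultimately have "0 < (cmod \<beta>)\<^sup>2"
    by (metis add_pos_nonneg zero_le_power2)
  then have "\<beta> \<noteq> 0"
    by auto
  then have \<beta>pq: "cnj \<beta> * p = Complex (- r) (Im \<alpha>)" "cnj \<beta> * q = Complex r (Im \<alpha>)"
    by (simp_all add: p_def q_def)
  then show "p \<noteq> q"
    using \<open>r > 0\<close> by auto
  have "cmod (Complex x (Im \<alpha>)) = cmod \<beta>" if "x\<^sup>2 = r\<^sup>2" for x
  proof -
    have "(cmod (Complex x (Im \<alpha>)))\<^sup>2 = (cmod \<beta>)\<^sup>2"
      using \<beta> that by (simp only: cmod_power2 complex.sel)
    then show ?thesis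
      by (simp add: power2_eq_iff_nonneg)
  qed
  then have pq_circle: "cmod p = 1" "cmod q = 1"
    using \<open>\<beta> \<noteq> 0\<close> by (simp_all add: p_def q_def norm_divide)
  show "{z. cmod z = 1 \<and> moebius (\<alpha>, \<beta>) z = z} = {p, q}"
  proof (intro set_eqI iffI)
    fix z assume "z \<in> {z. cmod z = 1 \<and> moebius (\<alpha>, \<beta>) z = z}"
    then have z: "cmod z = 1" and "Im (cnj \<beta> * z) = Im \<alpha>"
      using moebius_fixed_point_iff M by auto
    moreover have "(cmod (cnj \<beta> * z))\<^sup>2 = r\<^sup>2 + (Im \<alpha>)\<^sup>2"
      using z \<beta> by (simp add: norm_mult)
    ultimately have "(Re (cnj \<beta> * z))\<^sup>2 = r\<^sup>2"
      by (simp add: cmod_power2)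
    then have "Re (cnj \<beta> * z) = r \<or> Re (cnj \<beta> * z) = - r"
      by (simp add: power2_eq_iff)
    then have "cnj \<beta> * z = cnj \<beta> * p \<or> cnj \<beta> * z = cnj \<beta> * q"
      using \<open>Im (cnj \<beta> * z) = Im \<alpha>\<close> \<beta>pq by (auto simp: complex_eq_iff)
    then show "z \<in> {p, q}"
      using \<open>\<beta> \<noteq> 0\<close> by auto
  next
    fix z assume "z \<in> {p, q}"
    moreover have "moebius (\<alpha>, \<beta>) p = p" "moebius (\<alpha>, \<beta>) q = q"
      using moebius_fixed_point_iff [OF M] pq_circle \<beta>pq by (metis complex.sel(2))+
    ultimately show "z \<in> {z. cmod z = 1 \<and> moebius (\<alpha>, \<beta>) z = z}"
      using pq_circle by auto
  qed
qed

lemma su11_hyperbolic_dynamics: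
  assumes M: "su11 M" and hyperbolic: "1 < \<bar>Re (fst M)\<bar>"
    and H: "\<And>z. cmod z = 1 \<Longrightarrow> H z = moebius M z"
  shows "\<exists>p q. p \<noteq> q \<and> {z. cmod z = 1 \<and> H z = z} = {p, q} \<and>
    circle_attracting_fp H p \<and> circle_repelling_fp H q"
proof -
  obtain \<alpha> \<beta> where M': "su11 (\<alpha>, \<beta>)" "Re \<alpha> < -1"
    and H': "\<And>z. cmod z = 1 \<Longrightarrow> H z = moebius (\<alpha>, \<beta>) z"
  proof (cases M)
    case (Pair \<alpha> \<beta>)
    show ?thesis
    proof (cases "Re \<alpha> < -1")
      case True
      then show ?thesis
        using that M H Pair by auto
    next
      case False
      then have "Re (- \<alpha>) < -1"
        using hyperbolic Pair by auto
      then show ?thesis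
        using that [of "- \<alpha>" "- \<beta>"] M H Pair moebius_uminus by (metis norm_minus_cancel su11.simps)
    qed
  qed
  define r where "r = sqrt ((Re \<alpha>)\<^sup>2 - 1)"
  define p where "p = Complex (- r) (Im \<alpha>) / cnj \<beta>"
  define q where "q = Complex r (Im \<alpha>) / cnj \<beta>"
  have "r > 0" and pq: "p \<noteq> q" and fixed: "{z. cmod z = 1 \<and> moebius (\<alpha>, \<beta>) z = z} = {p, q}"
    using moebius_fixed_points_hyperbolic [OF M'] unfolding r_def p_def q_def by blast+
  then have p: "cmod p = 1" "moebius (\<alpha>, \<beta>) p = p" and q: "cmod q = 1" "moebius (\<alpha>, \<beta>) q = q"
    by auto
  have "\<beta> \<noteq> 0"
    using pq by (auto simp: p_def q_def)
  have "r < sqrt ((Re \<alpha>)\<^sup>2)"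
    unfolding r_def by (rule real_sqrt_less_mono) simp
  then have "r < - Re \<alpha>"
    using \<open>Re \<alpha> < -1\<close> by simp
  define k where "k = (cnj \<beta> * q + cnj \<alpha>) / (cnj \<beta> * p + cnj \<alpha>)"
  have "cnj \<beta> * q + cnj \<alpha> = of_real (Re \<alpha> + r)" "cnj \<beta> * p + cnj \<alpha> = of_real (Re \<alpha> - r)"
    using \<open>\<beta> \<noteq> 0\<close> by (simp_all add: p_def q_def complex_eq_iff)
  then have "k = of_real ((Re \<alpha> + r) / (Re \<alpha> - r))"
    by (simp add: k_def)
  then have "cmod k = (- Re \<alpha> - r) / (- Re \<alpha> + r)"
    using \<open>r > 0\<close> \<open>r < - Re \<alpha>\<close> by (simp add: norm_divide del: of_real_add of_real_diff)
  then have "cmod k < 1"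
    using \<open>r > 0\<close> \<open>r < - Re \<alpha>\<close> by simp
  have "{z. cmod z = 1 \<and> H z = z} = {p, q}"
    unfolding fixed [symmetric] using H' by metis
  moreover have "cmod (H z) = 1 \<and> H z \<noteq> q \<and> (H z - p) / (H z - q) = k * ((z - p) / (z - q))"
    if "cmod z = 1" "z \<noteq> q" for z
    using that moebius_cross_ratio [OF M'(1) p q] norm_moebius [OF M'(1)] H'
    unfolding k_def by auto
  then have "circle_attracting_fp H p" "circle_repelling_fp H q"
    using circle_attracting_repelling_fp [OF p(1) q(1) _ pq \<open>cmod k < 1\<close>] q H' by auto
  ultimately show ?thesis
    using pq by blast
qed

section \<open>Boosts\<close>

definition boost :: "real \<Rightarrow> complex \<Rightarrow> complex \<times> complex" where
  "boost x e = (of_real (cosh x), of_real (sinh x) * e)"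

lemma cosh_sq_minus_sinh_sq:
  "complex_of_real (cosh x) * of_real (cosh x) - of_real (sinh x) * of_real (sinh x) = 1"
proof -
  have "cosh x * cosh x - sinh x * sinh x = 1"
    using cosh_square_eq [of x] by (simp add: power2_eq_square)
  then show ?thesis
    by (metis of_real_1 of_real_diff of_real_mult)
qed

lemma su11_boost:
  assumes "cmod e = 1"
  shows "su11 (boost x e)"
proof -
  have "of_real (cosh x) * cnj (of_real (cosh x))
        - of_real (sinh x) * e * cnj (of_real (sinh x) * e)
      = complex_of_real (cosh x) * of_real (cosh x)
        - of_real (sinh x) * of_real (sinh x) * (e * cnj e)"
    by (simp add: algebra_simps)
  also have "\<dots> = 1"
    using assms cmod_eq_1_iff cosh_sq_minus_sinh_sq by simp
  finally show ?thesis
    by (simp only: boost_def su11_iff)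
qed

lemma su11_mult_boost:
  assumes "cmod e = 1"
  shows "su11_mult (boost x e) (boost y e) = boost (x + y) e"
proof -
  have "e * cnj e = 1"
    using assms cmod_eq_1_iff by blast
  then show ?thesis
    by (simp add: boost_def cosh_add sinh_add algebra_simps)
qed

lemma moebius_boost_inverse:
  assumes "cmod e = 1" "cmod z = 1"
  shows "moebius (boost x e) (moebius (boost (- x) e) z) = z"
proof -
  have "moebius (boost x e) (moebius (boost (- x) e) z) = moebius (boost 0 e) z"
    using assms by (simp add: moebius_mult su11_boost su11_mult_boost del: moebius.simps)
  then show ?thesis
    by (simp add: boost_def)
qed

lemma has_vector_derivative_quotient:
  fixes f g :: "real \<Rightarrow> 'a::real_normed_field"
  assumes "(f has_vector_derivative f') (at x within s)"
    and "(g has_vector_derivative g') (at x within s)" and "g x \<noteq> 0"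
  shows "((\<lambda>x. f x / g x) has_vector_derivative (f' * g x - f x * g') / (g x)\<^sup>2) (at x within s)"
proof -
  let ?D = "\<lambda>h. - f x * (inverse (g x) * (h *\<^sub>R g') * inverse (g x)) + (h *\<^sub>R f') / g x"
  have "((\<lambda>x. f x / g x) has_derivative ?D) (at x within s)"
    using has_derivative_divide [OF assms(1,2) [unfolded has_vector_derivative_def] assms(3)] .
  moreover have "?D = (\<lambda>h. h *\<^sub>R ((f' * g x - f x * g') / (g x)\<^sup>2))"
    using assms(3) by (auto simp: scaleR_conv_of_real field_simps power2_eq_square)
  ultimately show ?thesis
    unfolding has_vector_derivative_def by simp
qed

text \<open>The boost flow carries solutions of the Riccati equation u' = k (e - cnj e u^2) to
  solutions with speed k + \<sigma>'; for constant u this is the equation of the flow itself.\<close>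

lemma moebius_boost_has_vector_derivative:
  assumes e: "cmod e = 1" and u: "cmod (u t) = 1"
    and du: "(u has_vector_derivative of_real k * (e - cnj e * (u t)\<^sup>2)) (at t)"
    and d\<sigma>: "(\<sigma> has_real_derivative \<sigma>') (at t)"
  shows "((\<lambda>x. moebius (boost (\<sigma> x) e) (u x)) has_vector_derivative
      of_real (k + \<sigma>') * (e - cnj e * (moebius (boost (\<sigma> t) e) (u t))\<^sup>2)) (at t)"
proof -
  define C where "C x = complex_of_real (cosh (\<sigma> x))" for x
  define S where "S x = complex_of_real (sinh (\<sigma> x))" for x
  have M: "moebius (boost (\<sigma> x) e) (u x) = (C x * u x + S x * e) / (S x * cnj e * u x + C x)" for x
    by (simp add: boost_def C_def S_def)
  have dC: "(C has_vector_derivative of_real \<sigma>' * S t) (at t)"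
    unfolding C_def S_def
    by (rule has_vector_derivative_eq_rhs, rule has_vector_derivative_of_real)
      (auto intro!: derivative_eq_intros d\<sigma>)
  have dS: "(S has_vector_derivative of_real \<sigma>' * C t) (at t)"
    unfolding C_def S_def
    by (rule has_vector_derivative_eq_rhs, rule has_vector_derivative_of_real)
      (auto intro!: derivative_eq_intros d\<sigma>)
  let ?u' = "of_real k * (e - cnj e * (u t)\<^sup>2)"
  let ?N = "C t * u t + S t * e" and ?D = "S t * cnj e * u t + C t"
  let ?N' = "C t * ?u' + of_real \<sigma>' * S t * u t + of_real \<sigma>' * C t * e"
  let ?D' = "S t * cnj e * ?u' + of_real \<sigma>' * C t * cnj e * u t + of_real \<sigma>' * S t"
  have "?D \<noteq> 0"
    using moebius_denom_nonzero [OF su11_boost [OF e, unfolded boost_def] u, of "\<sigma> t"]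
    by (simp add: C_def S_def)
  have "((\<lambda>x. (C x * u x + S x * e) / (S x * cnj e * u x + C x)) has_vector_derivative
      (?N' * ?D - ?N * ?D') / ?D\<^sup>2) (at t)"
    by (intro has_vector_derivative_quotient \<open>?D \<noteq> 0\<close>)
      (auto intro!: derivative_eq_intros dC dS du simp: algebra_simps)
  moreover have "?N' * ?D - ?N * ?D' = of_real (k + \<sigma>') * (e * ?D\<^sup>2 - cnj e * ?N\<^sup>2)"
  proof -
    have "e * cnj e = 1"
      using e cmod_eq_1_iff by blast
    moreover have "C t * C t - S t * S t = 1"
      unfolding C_def S_def by (rule cosh_sq_minus_sinh_sq)
    ultimately show ?thesis
      by (simp only: of_real_add) algebra
  qed
  ultimately have "((\<lambda>x. (C x * u x + S x * e) / (S x * cnj e * u x + C x)) has_vector_derivative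
      of_real (k + \<sigma>') * (e * ?D\<^sup>2 - cnj e * ?N\<^sup>2) / ?D\<^sup>2) (at t)"
    by (simp only:)
  also have "of_real (k + \<sigma>') * (e * ?D\<^sup>2 - cnj e * ?N\<^sup>2) / ?D\<^sup>2
      = of_real (k + \<sigma>') * (e - cnj e * (?N / ?D)\<^sup>2)"
    using \<open>?D \<noteq> 0\<close> by (simp add: field_simps)
  finally show ?thesis
    unfolding M .
qed

text \<open>By su11_mult_boost, boost x (- e) = boost (- x) e is the inverse of boost x e.\<close>

definition boost_commutator :: "real \<Rightarrow> complex \<Rightarrow> real \<Rightarrow> complex \<Rightarrow> complex \<times> complex" where
  "boost_commutator x e y f =
     su11_mult (boost y f) (su11_mult (boost x e) (su11_mult (boost y (- f)) (boost x (- e))))"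

lemma su11_boost_commutator: "cmod e = 1 \<Longrightarrow> cmod f = 1 \<Longrightarrow> su11 (boost_commutator x e y f)"
  unfolding boost_commutator_def by (intro su11_mult_closed su11_boost) simp_all

lemma Re_boost_commutator:
  assumes "cmod e = 1" "cmod f = 1"
  shows "Re (fst (boost_commutator x e y f)) = 1 - 2 * (sinh x * sinh y * Im (f * cnj e))\<^sup>2"
proof -
  define c where "c = f * cnj e"
  let ?\<alpha> = "fst (boost_commutator x e y f)"
  have "e * cnj e = 1" "f * cnj f = 1"
    using assms cmod_eq_1_iff by blast+
  moreover have
    "complex_of_real (cosh x) * of_real (cosh x) - of_real (sinh x) * of_real (sinh x) = 1"
    "complex_of_real (cosh y) * of_real (cosh y) - of_real (sinh y) * of_real (sinh y) = 1"
    by (rule cosh_sq_minus_sinh_sq)+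
  ultimately have "?\<alpha> + cnj ?\<alpha> = 2 + (of_real (sinh x))\<^sup>2 * (of_real (sinh y))\<^sup>2 * (c - cnj c)\<^sup>2"
    unfolding boost_commutator_def boost_def su11_mult.simps fst_conv c_def
      complex_cnj_mult complex_cnj_add complex_cnj_minus complex_cnj_cnj complex_cnj_complex_of_real
    by algebra
  also have "c - cnj c = 2 * \<i> * of_real (Im c)"
    by (simp add: complex_eq_iff)
  also have "2 + (of_real (sinh x))\<^sup>2 * (of_real (sinh y))\<^sup>2 * (2 * \<i> * of_real (Im c))\<^sup>2
      = complex_of_real (2 - 4 * (sinh x * sinh y * Im c)\<^sup>2)"
    by (simp only: power_mult_distrib power2_i of_real_diff of_real_mult of_real_power
        of_real_numeral) algebra
  finally show ?thesis
    unfolding c_def complex_add_cnj of_real_eq_iff by simp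
qed


section \<open>Transport of the planimeter rod\<close>

lemma prytz_ode_riccati:
  assumes "cmod u = 1" "l \<noteq> 0"
  shows "prytz_ode l d u = of_real (cmod d / (2 * l)) * (- sgn d - cnj (- sgn d) * u\<^sup>2)"
proof -
  have Im_eq: "complex_of_real (Im x) = - \<i> * (x - cnj x) / 2" for x
    by (simp add: complex_eq_iff)
  have "prytz_ode l d u = - (\<i> * (- \<i> * (d * cnj u - cnj d * u) / (2 * of_real l))) * u"
    unfolding prytz_ode_def of_real_divide Im_eq by simp
  also have "\<dots> = (cnj d * u\<^sup>2 - d * (u * cnj u)) / (2 * of_real l)"
    using assms(2) by (simp add: field_simps power2_eq_square)
  also have "\<dots> = (cnj d * u\<^sup>2 - d) / (2 * of_real l)"
    using assms(1) cmod_eq_1_iff by simp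
  also have "\<dots> = of_real (cmod d / (2 * l)) * (- sgn d - cnj (- sgn d) * u\<^sup>2)"
  proof -
    have "d = of_real (cmod d) * sgn d"
      by (simp add: complex_sgn_def scaleR_conv_of_real field_simps)
    then have "cnj d = of_real (cmod d) * cnj (sgn d)"
      by (metis complex_cnj_complex_of_real complex_cnj_mult)
    with \<open>d = of_real (cmod d) * sgn d\<close> show ?thesis
      using assms(2) by (simp add: field_simps)
  qed
  finally show ?thesis .
qed

lemma prytz_ode_orthogonal: "u * cnj (prytz_ode l d u) + prytz_ode l d u * cnj u = 0"
proof -
  have "u * cnj (- (\<i> * of_real r) * u) + - (\<i> * of_real r) * u * cnj u = 0" for r
    by (simp add: algebra_simps)
  then show ?thesis
    unfolding prytz_ode_def .
qed

lemma has_vector_derivative_zero_imp_constant_interval: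
  fixes f :: "real \<Rightarrow> 'a::banach"
  assumes "finite S" "continuous_on {a..b} f"
    and "\<And>x. x \<in> {a<..<b} - S \<Longrightarrow> (f has_vector_derivative 0) (at x)"
    and "t \<in> {a..b}"
  shows "f t = f a"
proof (rule has_derivative_zero_unique_strong_interval [of "S \<union> {a, b}"])
  fix x assume "x \<in> {a..b} - (S \<union> {a, b})"
  then have "(f has_vector_derivative 0) (at x within {a..b})"
    using assms(3) by (auto intro: has_vector_derivative_at_within)
  then show "(f has_derivative (\<lambda>h. 0)) (at x within {a..b})"
    by (simp add: has_vector_derivative_def)
qed (use assms in auto)

definition prytz_solution :: "real \<Rightarrow> (real \<Rightarrow> complex) \<Rightarrow> real \<Rightarrow> real \<Rightarrow> (real \<Rightarrow> complex) \<Rightarrow> bool" where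
  "prytz_solution l \<gamma> a b u \<longleftrightarrow> continuous_on {a..b} u \<and>
     (\<exists>S. finite S \<and> (\<forall>t\<in>{a<..<b} - S.
        (u has_vector_derivative prytz_ode l (vector_derivative \<gamma> (at t)) (u t)) (at t)))"

lemma prytz_solution_norm:
  assumes "prytz_solution l \<gamma> a b u" "t \<in> {a..b}"
  shows "cmod (u t) = cmod (u a)"
proof -
  obtain S where S: "finite S" and cont: "continuous_on {a..b} u"
    and du: "\<And>t. t \<in> {a<..<b} - S \<Longrightarrow>
      (u has_vector_derivative prytz_ode l (vector_derivative \<gamma> (at t)) (u t)) (at t)"
    using assms(1) unfolding prytz_solution_def by blast
  have "u t * cnj (u t) = u a * cnj (u a)"
  proof (rule has_vector_derivative_zero_imp_constant_interval [OF S _ _ assms(2)])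
    show "continuous_on {a..b} (\<lambda>x. u x * cnj (u x))"
      by (intro continuous_intros cont)
    fix x assume "x \<in> {a<..<b} - S"
    then have "((\<lambda>x. u x * cnj (u x)) has_vector_derivative
        u x * cnj (prytz_ode l (vector_derivative \<gamma> (at x)) (u x))
        + prytz_ode l (vector_derivative \<gamma> (at x)) (u x) * cnj (u x)) (at x)"
      by (intro has_vector_derivative_mult has_vector_derivative_cnj du)
    then show "((\<lambda>x. u x * cnj (u x)) has_vector_derivative 0) (at x)"
      by (simp only: prytz_ode_orthogonal)
  qed
  then have "(cmod (u t))\<^sup>2 = (cmod (u a))\<^sup>2"
    by (metis complex_norm_square of_real_eq_iff)
  then show ?thesis
    by (simp add: power2_eq_iff_nonneg)
qed

lemma prytz_solution_subinterval:
  assumes "prytz_solution l \<gamma> a b u" "a \<le> a'" "b' \<le> b"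
  shows "prytz_solution l \<gamma> a' b' u"
proof -
  have "{a'..b'} \<subseteq> {a..b}" "{a'<..<b'} \<subseteq> {a<..<b}"
    using assms(2,3) by auto
  then show ?thesis
    using assms(1) unfolding prytz_solution_def
    by (meson Diff_mono continuous_on_subset subset_refl subsetD)
qed

lemma prytz_solution_join:
  assumes u: "prytz_solution l \<gamma> a b u" and v: "prytz_solution l \<gamma> b c v"
    and "u b = v b" "a \<le> b" "b \<le> c"
  shows "prytz_solution l \<gamma> a c (\<lambda>t. if t \<le> b then u t else v t)"
proof -
  obtain S where S: "finite S" and cu: "continuous_on {a..b} u"
    and du: "\<And>t. t \<in> {a<..<b} - S \<Longrightarrow>
      (u has_vector_derivative prytz_ode l (vector_derivative \<gamma> (at t)) (u t)) (at t)"
    using u unfolding prytz_solution_def by blast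
  obtain S' where S': "finite S'" and cv: "continuous_on {b..c} v"
    and dv: "\<And>t. t \<in> {b<..<c} - S' \<Longrightarrow>
      (v has_vector_derivative prytz_ode l (vector_derivative \<gamma> (at t)) (v t)) (at t)"
    using v unfolding prytz_solution_def by blast
  let ?w = "\<lambda>t. if t \<le> b then u t else v t"
  have "continuous_on ({a..b} \<union> {b..c}) ?w"
  proof (rule continuous_on_closed_Un)
    show "continuous_on {a..b} ?w"
      using cu by (rule continuous_on_eq) simp
    show "continuous_on {b..c} ?w"
      using cv by (rule continuous_on_eq) (use \<open>u b = v b\<close> in \<open>auto simp: antisym\<close>)
  qed auto
  moreover have "{a..b} \<union> {b..c} = {a..c}"
    using \<open>a \<le> b\<close> \<open>b \<le> c\<close> by auto
  moreover have "(?w has_vector_derivative prytz_ode l (vector_derivative \<gamma> (at t)) (?w t)) (at t)"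
    if t: "t \<in> {a<..<c} - (S \<union> S' \<union> {b})" for t
  proof (cases "t < b")
    case True
    then have "t \<in> {a<..<b} - S"
      using t by auto
    then have "(u has_vector_derivative prytz_ode l (vector_derivative \<gamma> (at t)) (u t)) (at t)"
      by (rule du)
    then have "(?w has_vector_derivative prytz_ode l (vector_derivative \<gamma> (at t)) (u t)) (at t)"
      by (rule has_vector_derivative_transform_within_open [where S = "{a<..<b}"])
        (use True t in auto)
    then show ?thesis
      using True by simp
  next
    case False
    then have "t \<in> {b<..<c} - S'"
      using t by auto
    then have "(v has_vector_derivative prytz_ode l (vector_derivative \<gamma> (at t)) (v t)) (at t)"
      by (rule dv)
    then have "(?w has_vector_derivative prytz_ode l (vector_derivative \<gamma> (at t)) (v t)) (at t)"
      by (rule has_vector_derivative_transform_within_open [where S = "{b<..<c}"])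
        (use False t in auto)
    then show ?thesis
      using False t by auto
  qed
  moreover have "finite (S \<union> S' \<union> {b})"
    using S S' by simp
  ultimately show ?thesis
    unfolding prytz_solution_def by metis
qed

lemma prytz_solution_boost_flow:
  assumes "l > 0" and d: "d \<noteq> 0" and z: "cmod z = 1"
    and \<gamma>: "\<And>t. t \<in> {a<..<b} \<Longrightarrow> (\<gamma> has_vector_derivative d) (at t)"
  defines "k \<equiv> cmod d / (2 * l)"
  shows "prytz_solution l \<gamma> a b (\<lambda>t. moebius (boost ((t - a) * k) (- sgn d)) z)"
proof -
  let ?u = "\<lambda>t. moebius (boost ((t - a) * k) (- sgn d)) z"
  have e: "cmod (- sgn d) = 1"
    using d by (simp add: norm_sgn)
  have "((\<lambda>t. (t - a) * k) has_real_derivative k) (at t)" for t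
    by (auto intro!: derivative_eq_intros)
  then have "(?u has_vector_derivative
      of_real k * (- sgn d - cnj (- sgn d) * (?u t)\<^sup>2)) (at t)" for t
    using moebius_boost_has_vector_derivative
      [where u = "\<lambda>_. z" and k = 0 and \<sigma> = "\<lambda>t. (t - a) * k", OF e z]
    by simp
  moreover have "cmod (?u t) = 1" for t
    using norm_moebius [OF su11_boost [OF e] z] .
  ultimately have deriv: "(?u has_vector_derivative prytz_ode l d (?u t)) (at t)" for t
    using prytz_ode_riccati \<open>l > 0\<close> by (simp add: k_def)
  then have "continuous_on {a..b} ?u"
    by (meson continuous_on_vector_derivative has_vector_derivative_at_within)
  moreover have "vector_derivative \<gamma> (at t) = d" if "t \<in> {a<..<b}" for t
    using \<gamma> [OF that] by (rule vector_derivative_at)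
  ultimately show ?thesis
    unfolding prytz_solution_def using deriv by (intro conjI exI [of _ "{}"]) simp_all
qed

text \<open>Pulled back along the inverse boost flow, a solution becomes constant.\<close>

lemma prytz_solution_unique:
  assumes "l > 0" and d: "d \<noteq> 0" and "a \<le> b"
    and \<gamma>: "\<And>t. t \<in> {a<..<b} \<Longrightarrow> (\<gamma> has_vector_derivative d) (at t)"
    and u: "prytz_solution l \<gamma> a b u" and ua: "cmod (u a) = 1"
  defines "k \<equiv> cmod d / (2 * l)"
  shows "u b = moebius (boost ((b - a) * k) (- sgn d)) (u a)"
proof -
  define e where "e = - sgn d"
  have e: "cmod e = 1"
    using d by (simp add: e_def norm_sgn)
  obtain S where S: "finite S" and cu: "continuous_on {a..b} u"
    and du: "\<And>t. t \<in> {a<..<b} - S \<Longrightarrow>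
      (u has_vector_derivative prytz_ode l (vector_derivative \<gamma> (at t)) (u t)) (at t)"
    using u unfolding prytz_solution_def by blast
  have circle: "cmod (u t) = 1" if "t \<in> {a..b}" for t
    using prytz_solution_norm [OF u that] ua by simp
  define w where "w t = moebius (boost (- ((t - a) * k)) e) (u t)" for t
  have "w b = w a"
  proof (rule has_vector_derivative_zero_imp_constant_interval [OF S])
    have "cnj (of_real (sinh (- ((t - a) * k))) * e) * u t
        + cnj (of_real (cosh (- ((t - a) * k)))) \<noteq> 0"
      if "t \<in> {a..b}" for t
      using moebius_denom_nonzero [OF su11_boost [OF e, unfolded boost_def] circle [OF that]] .
    then show "continuous_on {a..b} w"
      unfolding w_def boost_def moebius.simps by (intro continuous_intros cu) auto
    fix t assume t: "t \<in> {a<..<b} - S"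
    then have "t \<in> {a..b}"
      by auto
    have d\<sigma>: "((\<lambda>t. - ((t - a) * k)) has_real_derivative - k) (at t)"
      by (auto intro!: derivative_eq_intros)
    have "vector_derivative \<gamma> (at t) = d"
      using \<gamma> t vector_derivative_at by blast
    then have "(u has_vector_derivative of_real k * (e - cnj e * (u t)\<^sup>2)) (at t)"
      using du [OF t] prytz_ode_riccati [OF circle [OF \<open>t \<in> {a..b}\<close>]] \<open>l > 0\<close>
      by (simp add: k_def e_def)
    from moebius_boost_has_vector_derivative [OF e circle [OF \<open>t \<in> {a..b}\<close>] this d\<sigma>]
    show "(w has_vector_derivative 0) (at t)"
      unfolding w_def by simp
  qed (use \<open>a \<le> b\<close> in auto)
  moreover have "w a = u a"
    by (simp add: w_def boost_def)
  ultimately show ?thesis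
    using moebius_boost_inverse [OF e circle, of b "(b - a) * k"] \<open>a \<le> b\<close> by (simp add: w_def e_def)
qed

text \<open>Since prytz_holonomy is defined by a definite description, transports must be shown to
  exist as well as to be unique.\<close>

definition prytz_propagator ::
  "real \<Rightarrow> (real \<Rightarrow> complex) \<Rightarrow> real \<Rightarrow> real \<Rightarrow> (complex \<Rightarrow> complex) \<Rightarrow> bool" where
  "prytz_propagator l \<gamma> a b F \<longleftrightarrow>
     (\<forall>z. cmod z = 1 \<longrightarrow> (\<exists>u. prytz_solution l \<gamma> a b u \<and> u a = z)) \<and>
     (\<forall>u. prytz_solution l \<gamma> a b u \<and> cmod (u a) = 1 \<longrightarrow> u b = F (u a))"

lemma prytz_propagator_segment:
  assumes "l > 0" "d \<noteq> 0" "a \<le> b"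
    and "\<And>t. t \<in> {a<..<b} \<Longrightarrow> (\<gamma> has_vector_derivative d) (at t)"
  shows "prytz_propagator l \<gamma> a b (moebius (boost ((b - a) * (cmod d / (2 * l))) (- sgn d)))"
proof -
  have "moebius (boost ((a - a) * k) e) z = z" for k e z
    by (simp add: boost_def)
  then show ?thesis
    unfolding prytz_propagator_def
    using prytz_solution_boost_flow [OF assms(1,2) _ assms(4)] prytz_solution_unique [OF assms]
    by metis
qed

lemma prytz_propagator_trans:
  assumes F: "prytz_propagator l \<gamma> a b F" and G: "prytz_propagator l \<gamma> b c G" and "a \<le> b" "b \<le> c"
  shows "prytz_propagator l \<gamma> a c (G \<circ> F)"
  unfolding prytz_propagator_def
proof (intro conjI allI impI)
  fix z :: complex assume "cmod z = 1"
  then obtain u where u: "prytz_solution l \<gamma> a b u" "u a = z"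
    using F unfolding prytz_propagator_def by blast
  then have "cmod (u b) = 1"
    using prytz_solution_norm [OF u(1), of b] \<open>a \<le> b\<close> \<open>cmod z = 1\<close> by simp
  then obtain v where v: "prytz_solution l \<gamma> b c v" "v b = u b"
    using G unfolding prytz_propagator_def by blast
  show "\<exists>u. prytz_solution l \<gamma> a c u \<and> u a = z"
    using prytz_solution_join [OF u(1) v(1)] v(2) u(2) assms(3,4)
    by (intro exI [of _ "\<lambda>t. if t \<le> b then u t else v t"]) auto
next
  fix u assume u: "prytz_solution l \<gamma> a c u \<and> cmod (u a) = 1"
  then have "u b = F (u a)"
    using F prytz_solution_subinterval [of l \<gamma> a c u a b] \<open>b \<le> c\<close>
    unfolding prytz_propagator_def by auto
  moreover have "cmod (u b) = 1"
    using prytz_solution_norm [of l \<gamma> a c u b] u assms(3,4) by simp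
  ultimately show "u c = (G \<circ> F) (u a)"
    using G prytz_solution_subinterval [of l \<gamma> a c u b c] u \<open>a \<le> b\<close>
    unfolding prytz_propagator_def by auto
qed

lemma prytz_holonomy_eqI:
  assumes "finite T" "\<And>t. t \<in> {0<..<1} - T \<Longrightarrow> \<gamma> differentiable at t"
    and F: "prytz_propagator l \<gamma> 0 1 F" and z: "cmod z = 1"
  shows "prytz_holonomy l \<gamma> z = F z"
proof -
  have transport: "prytz_transport l \<gamma> z u \<longleftrightarrow> prytz_solution l \<gamma> 0 1 u \<and> u 0 = z" for u
  proof
    assume "prytz_transport l \<gamma> z u"
    then show "prytz_solution l \<gamma> 0 1 u \<and> u 0 = z"
      unfolding prytz_transport_def prytz_solution_def by blast
  next
    assume "prytz_solution l \<gamma> 0 1 u \<and> u 0 = z"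
    then obtain S where "continuous_on {0..1} u" "u 0 = z" "finite S"
      "\<forall>t\<in>{0<..<1} - S.
        (u has_vector_derivative prytz_ode l (vector_derivative \<gamma> (at t)) (u t)) (at t)"
      unfolding prytz_solution_def by blast
    then show "prytz_transport l \<gamma> z u"
      unfolding prytz_transport_def using assms(1,2) by (intro conjI exI [of _ "S \<union> T"]) auto
  qed
  show ?thesis
    unfolding prytz_holonomy_def transport
  proof (rule the_equality)
    show "\<exists>u. (prytz_solution l \<gamma> 0 1 u \<and> u 0 = z) \<and> u 1 = F z"
      using F z unfolding prytz_propagator_def by metis
    show "y = F z" if "\<exists>u. (prytz_solution l \<gamma> 0 1 u \<and> u 0 = z) \<and> u 1 = y" for y
      using that F z unfolding prytz_propagator_def by metis
  qed
qed

section \<open>The parallelogram\<close>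

lemma has_vector_derivative_affine_on_interval:
  fixes \<gamma> :: "real \<Rightarrow> complex"
  assumes "t \<in> {lo<..<hi}" "\<And>y. y \<in> {lo<..<hi} \<Longrightarrow> \<gamma> y = A + of_real y * B"
  shows "(\<gamma> has_vector_derivative B) (at t)"
proof -
  have "((\<lambda>y. A + of_real y * B) has_vector_derivative B) (at t)"
    by (auto intro!: derivative_eq_intros)
  then show ?thesis
    by (rule has_vector_derivative_transform_within_open [of _ _ _ "{lo<..<hi}"])
      (use assms in auto)
qed

lemma parallelogram_path_affine:
  fixes v w :: complex
  shows "y \<in> {0<..<1/4} \<Longrightarrow> parallelogram_path v w y = 0 + of_real y * (4 * v)"
    and "y \<in> {1/4<..<1/2} \<Longrightarrow> parallelogram_path v w y = (v - w) + of_real y * (4 * w)"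
    and "y \<in> {1/2<..<3/4} \<Longrightarrow> parallelogram_path v w y = (3 * v + w) + of_real y * (- (4 * v))"
    and "y \<in> {3/4<..<1} \<Longrightarrow> parallelogram_path v w y = 4 * w + of_real y * (- (4 * w))"
  by (auto simp: parallelogram_path_def joinpaths_def linepath_def scaleR_conv_of_real
      algebra_simps)

lemma parallelogram_path_has_vector_derivative:
  fixes v w :: complex
  shows "t \<in> {0<..<1/4} \<Longrightarrow> (parallelogram_path v w has_vector_derivative 4 * v) (at t)"
    and "t \<in> {1/4<..<1/2} \<Longrightarrow> (parallelogram_path v w has_vector_derivative 4 * w) (at t)"
    and "t \<in> {1/2<..<3/4} \<Longrightarrow> (parallelogram_path v w has_vector_derivative - (4 * v)) (at t)"
    and "t \<in> {3/4<..<1} \<Longrightarrow> (parallelogram_path v w has_vector_derivative - (4 * w)) (at t)"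
  by (rule has_vector_derivative_affine_on_interval,
      assumption, rule parallelogram_path_affine [where v = v and w = w], assumption)+

lemma parallelogram_path_differentiable:
  assumes "t \<in> {0<..<1} - {1/4, 1/2, 3/4}"
  shows "parallelogram_path v w differentiable at t"
proof -
  have "t \<in> {0<..<1/4} \<or> t \<in> {1/4<..<1/2} \<or> t \<in> {1/2<..<3/4} \<or> t \<in> {3/4<..<1}"
    using assms by auto
  then show ?thesis
    using parallelogram_path_has_vector_derivative [of t v w] differentiableI_vector by blast
qed

lemma prytz_holonomy_parallelogram:
  assumes l: "l > 0" and "v \<noteq> 0" "w \<noteq> 0" "cmod z = 1"
  defines "a \<equiv> cmod v / (2 * l)" and "b \<equiv> cmod w / (2 * l)"
  shows "prytz_holonomy l (parallelogram_path v w) z =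
    moebius (boost_commutator a (sgn v) b (sgn w)) z"
proof -
  let ?\<gamma> = "parallelogram_path v w"
  have unit: "cmod (sgn v) = 1" "cmod (sgn w) = 1"
    using \<open>v \<noteq> 0\<close> \<open>w \<noteq> 0\<close> by (simp_all add: norm_sgn)
  have sgn4: "sgn (4 * x) = sgn x" for x :: complex
    by (simp add: sgn_mult sgn_div_norm scaleR_conv_of_real)
  have P1: "prytz_propagator l ?\<gamma> 0 (1/4) (moebius (boost a (- sgn v)))"
    using prytz_propagator_segment [OF l, of "4 * v" 0 "1/4"]
      parallelogram_path_has_vector_derivative(1) \<open>v \<noteq> 0\<close>
    by (simp add: a_def norm_mult sgn4)
  have P2: "prytz_propagator l ?\<gamma> (1/4) (1/2) (moebius (boost b (- sgn w)))"
    using prytz_propagator_segment [OF l, of "4 * w" "1/4" "1/2"]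
      parallelogram_path_has_vector_derivative(2) \<open>w \<noteq> 0\<close>
    by (simp add: b_def norm_mult sgn4)
  have P3: "prytz_propagator l ?\<gamma> (1/2) (3/4) (moebius (boost a (sgn v)))"
    using prytz_propagator_segment [OF l, of "- (4 * v)" "1/2" "3/4"]
      parallelogram_path_has_vector_derivative(3) \<open>v \<noteq> 0\<close>
    by (simp add: a_def norm_mult sgn4)
  have P4: "prytz_propagator l ?\<gamma> (3/4) 1 (moebius (boost b (sgn w)))"
    using prytz_propagator_segment [OF l, of "- (4 * w)" "3/4" 1]
      parallelogram_path_has_vector_derivative(4) \<open>w \<noteq> 0\<close>
    by (simp add: b_def norm_mult sgn4)
  have "prytz_propagator l ?\<gamma> 0 1 (moebius (boost b (sgn w)) \<circ> moebius (boost a (sgn v)) \<circ>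
      moebius (boost b (- sgn w)) \<circ> moebius (boost a (- sgn v)))"
    using prytz_propagator_trans
      [OF prytz_propagator_trans [OF prytz_propagator_trans [OF P1 P2] P3] P4]
    by (simp add: comp_assoc)
  then have "prytz_holonomy l ?\<gamma> z = moebius (boost b (sgn w)) (moebius (boost a (sgn v))
      (moebius (boost b (- sgn w)) (moebius (boost a (- sgn v)) z)))"
    using prytz_holonomy_eqI [of "{1/4, 1/2, 3/4}"] parallelogram_path_differentiable \<open>cmod z = 1\<close>
    by simp
  also have "\<dots> = moebius (boost_commutator a (sgn v) b (sgn w)) z"
    using unit \<open>cmod z = 1\<close> unfolding boost_commutator_def
    by (simp add: moebius_mult su11_boost su11_mult_closed norm_moebius del: moebius.simps)
  finally show ?thesis .
qed

theorem mainTheorem6: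
  fixes v w :: complex and \<theta> l :: real
  assumes "v \<noteq> 0" "w \<noteq> 0" "0 < \<theta>" "\<theta> < pi" "sgn w = cis \<theta> * sgn v" "l > 0"
  defines "H \<equiv> prytz_holonomy l (parallelogram_path v w)"
    and "s \<equiv> sinh (cmod v / (2 * l)) * sinh (cmod w / (2 * l)) * sin \<theta>"
  shows "(\<exists>\<alpha> \<beta>. (cmod \<alpha>)\<^sup>2 - (cmod \<beta>)\<^sup>2 = 1 \<and>
             \<alpha> + cnj \<alpha> = complex_of_real (2 - 4 * s\<^sup>2) \<and>
             (\<forall>z. cmod z = 1 \<longrightarrow> H z = (\<alpha> * z + \<beta>) / (cnj \<beta> * z + cnj \<alpha>)))
       \<and> (s > 1 \<longrightarrow> (\<exists>a r. a \<noteq> r \<and> {z. cmod z = 1 \<and> H z = z} = {a, r} \<and>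
                          circle_attracting_fp H a \<and> circle_repelling_fp H r))
       \<and> (s < 1 \<longrightarrow> (\<forall>z. cmod z = 1 \<longrightarrow> H z \<noteq> z))"
proof -
  define a where "a = cmod v / (2 * l)"
  define b where "b = cmod w / (2 * l)"
  obtain \<alpha> \<beta> where P: "(\<alpha>, \<beta>) = boost_commutator a (sgn v) b (sgn w)"
    by (metis surj_pair)
  have unit: "cmod (sgn v) = 1" "cmod (sgn w) = 1"
    using assms(1,2) by (simp_all add: norm_sgn)
  have su11: "su11 (\<alpha>, \<beta>)"
    unfolding P using unit by (rule su11_boost_commutator)
  have H: "H z = moebius (\<alpha>, \<beta>) z" if "cmod z = 1" for z
    unfolding H_def P a_def b_def using prytz_holonomy_parallelogram [OF assms(6,1,2) that] .
  have "sgn w * cnj (sgn v) = cis \<theta>"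
    using assms(5) unit(1) cmod_eq_1_iff by (simp add: mult.assoc)
  then have Re\<alpha>: "Re \<alpha> = 1 - 2 * s\<^sup>2"
    using Re_boost_commutator [OF unit, of a b] unfolding P [symmetric]
    by (simp add: s_def a_def b_def)
  have "s > 0"
    unfolding s_def using assms(1-4,6) by (simp add: sin_gt_zero)
  show ?thesis
  proof (intro conjI impI)
    show "\<exists>\<alpha> \<beta>. (cmod \<alpha>)\<^sup>2 - (cmod \<beta>)\<^sup>2 = 1 \<and> \<alpha> + cnj \<alpha> = complex_of_real (2 - 4 * s\<^sup>2) \<and>
        (\<forall>z. cmod z = 1 \<longrightarrow> H z = (\<alpha> * z + \<beta>) / (cnj \<beta> * z + cnj \<alpha>))"
      using su11 H Re\<alpha> by (intro exI [of _ \<alpha>] exI [of _ \<beta>]) (simp add: complex_add_cnj)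
    assume "s > 1"
    then have "1 < s\<^sup>2"
      by (simp add: one_less_power)
    then have "1 < \<bar>Re \<alpha>\<bar>"
      using Re\<alpha> by arith
    then show "\<exists>a r. a \<noteq> r \<and> {z. cmod z = 1 \<and> H z = z} = {a, r} \<and>
        circle_attracting_fp H a \<and> circle_repelling_fp H r"
      using su11_hyperbolic_dynamics [OF su11] H by simp
  next
    assume "s < 1"
    then have "0 < s\<^sup>2" "s\<^sup>2 < 1"
      using \<open>s > 0\<close> by (simp_all add: power_less_one_iff)
    then have "\<bar>Re \<alpha>\<bar> < 1"
      using Re\<alpha> by arith
    then show "\<forall>z. cmod z = 1 \<longrightarrow> H z \<noteq> z"
      using moebius_no_fixed_point_on_circle [OF su11] H by simp
  qed
qed

end
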